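(* There is a constant $K$ such that the following holds. Let $d\in\mathbb{N}$ and $0\le r\le s\le N$ with $s-r\ge d$. Let $\mathcal{L}$ be the event that $pr$ is a renewal point and the restriction of the partition to $\{0,\ldots,pr-1\}$ coincides with some given partition of this set. Let $\mathcal{R}$ be the event that $ps$ is a renewal point and the restriction of the partition to $\{ps,\ldots,pN-1\}$ coincides with some given partition of this set. Then $$\bigl|\mathbb{P}_N(\mathcal{L}\cap\mathcal{R})-\mathbb{P}_N(\mathcal{L})\mathbb{P}_N(\mathcal{R})\bigr|\le K\,\mathbb{P}_N(\mathcal{L})\,\mathbb{P}_N(\mathcal{R})\sup_{k\ge d}|u_k-\mu^{-1}| .$$
   Context: Setting. Let $R,\ell>0$, $p\in\mathbb{N}$ and $\gamma=\ell/R$. $\mathcal{Z}=\mathbb{R}\times[0,2\pi R]$. Laughlin's function. $$\Psi_N=\kappa_N\prod_{j<k}\bigl(e^{z_k/R}-e^{z_j/R}\bigr)^p e^{-\sum x_k^2/(2\ell^2)},$$ with $$\kappa_N=(N!)^{-1/2}(2\pi R\ell\sqrt\pi)^{-N/2}\exp\Bigl(-\tfrac12p^2\gamma^2\sum_{j=1}^N(j-1)^2\Bigr),$$ and $C_N=\|\Psi_N\|^2_{L^2(\mathcal{Z}^N)}$. Orbitals and coefficients. $\psi_k(z)\propto e^{kz/R}e^{-x^2/(2\ell^2)}$ are orthonormal, and $$\Psi_N=(N!)^{-1/2}\sum_{\mathbf m}a_N(\mathbf m)\prod_i\psi_{m_i}(z_i).$$ Renewal points of tuples. A number $pk$ with $0\le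 k\le N$ is a renewal point of $\mathbf m$ if the $k$ smallest entries sum to $pk(k-1)/2$. Renewal weights. $\alpha_n=\frac1{n!}\sum|a_n(\mathbf m)|^2$, summed over $\mathbf m\in\{0,\ldots,pn-p\}^n$ whose only renewal points are $0$ and $pn$. $r=\exp(-\lim_N\frac1N\ln C_N)$, $p_n=\alpha_nr^n$, and $u_N=C_Nr^N$. It is known that: - $u_N=\sum_{n_1+\cdots+n_D=N}p_{n_1}\cdots p_{n_D}$; - $\sum p_n=1$; - $\mu=\sum np_n<\infty$; - $u_N\to\mu^{-1}$. Partitions. $\mathcal{P}_N$ is the set of partitions of $\{0,\ldots,pN-1\}$ into rods $\{pj,\ldots,pj+pn-1\}$ with $n\ge1$. Its renewal points are the left endpoints of the rods together with $pN$. The probability $\mathbb{P}_N$ of a partition with rod lengths $pn_1,\ldots,pn_D$ is $p_{n_1}\cdots p_{n_D}/u_N$. *)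

theory Defs
  imports "HOL-Analysis.Analysis"
begin

definition rod :: "nat \<Rightarrow> nat \<Rightarrow> nat \<Rightarrow> nat set" where
  "rod p j n = {p * j ..< p * j + p * n}"

definition rod_partitions :: "nat \<Rightarrow> nat \<Rightarrow> nat set set set" where
  "rod_partitions p N = {P. \<Union>P = {0..<p * N}
      \<and> (\<forall>A\<in>P. \<forall>B\<in>P. A \<noteq> B \<longrightarrow> A \<inter> B = {})
      \<and> (\<forall>A\<in>P. \<exists>j n. n \<ge> 1 \<and> A = rod p j n)}"

definition renewal_points :: "nat \<Rightarrow> nat \<Rightarrow> nat set set \<Rightarrow> nat set" where
  "renewal_points p N P = Min ` P \<union> {p * N}"

definition restrict_part :: "nat set set \<Rightarrow> nat set \<Rightarrow> nat set set" where
  "restrict_part P S = (\<lambda>A. A \<inter> S) ` P - {{}}"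

definition compositions :: "nat \<Rightarrow> nat list set" where
  "compositions N = {xs. (\<forall>x\<in>set xs. x \<ge> 1) \<and> sum_list xs = N}"

text \<open>u_N = sum over n_1+...+n_D = N of p_{n_1}...p_{n_D} (the renewal weights are q).\<close>
definition renewal_u :: "(nat \<Rightarrow> real) \<Rightarrow> nat \<Rightarrow> real" where
  "renewal_u q N = (\<Sum>xs\<in>compositions N. prod_list (map q xs))"

definition part_weight :: "nat \<Rightarrow> (nat \<Rightarrow> real) \<Rightarrow> nat set set \<Rightarrow> real" where
  "part_weight p q P = (\<Prod>A\<in>P. q (card A div p))"

definition prob_N :: "nat \<Rightarrow> (nat \<Rightarrow> real) \<Rightarrow> nat \<Rightarrow> nat set set set \<Rightarrow> real" where
  "prob_N p q N E = (\<Sum>P\<in>rod_partitions p N \<inter> E. part_weight p q P) / renewal_u q N"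

definition event_L :: "nat \<Rightarrow> nat \<Rightarrow> nat \<Rightarrow> nat set set \<Rightarrow> nat set set set" where
  "event_L p N r Q = {P. p * r \<in> renewal_points p N P \<and> restrict_part P {0..<p * r} = Q}"

definition event_R :: "nat \<Rightarrow> nat \<Rightarrow> nat \<Rightarrow> nat set set \<Rightarrow> nat set set set" where
  "event_R p N s Q = {P. p * s \<in> renewal_points p N P \<and> restrict_part P {p * s..<p * N} = Q}"

definition renewal_mu :: "(nat \<Rightarrow> real) \<Rightarrow> real" where
  "renewal_mu q = (\<Sum>n. real n * q n)"

end

theory Submission
  imports Defs "HOL-Library.Sublist"
begin

text \<open>
Reading the rod lengths from left to right identifies rod partitions of \<open>{0..<pN}\<close> with
compositions of \<open>N\<close>; the weight of a partition is the product of \<open>q\<close> over its composition.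
The event \<open>L\<close> prescribes the composition up to partial sum \<open>r\<close> and \<open>R\<close> prescribes it from
partial sum \<open>s\<close> on, the remaining parts being arbitrary compositions. So, with \<open>a\<close> and \<open>b\<close> the
weights of the prescribed parts, the weights of \<open>L\<close>, \<open>R\<close> and \<open>L \<inter> R\<close> are \<open>a u(N-r)\<close>,
\<open>u(s) b\<close> and \<open>a u(s-r) b\<close>, and the covariance is \<open>a b (u(s-r) u(N) - u(N-r) u(s)) / u(N)\<^sup>2\<close>.
All four indices are at least \<open>d\<close>, so each \<open>u\<close> is within \<open>\<epsilon> = sup\<^sub>k\<^sub>\<ge>\<^sub>d |u(k) - 1/\<mu>|\<close>
of \<open>1/\<mu>\<close>. For \<open>\<epsilon> < 1/(2\<mu>)\<close> this makes the bracket \<open>O(\<epsilon> u(N-r) u(s))\<close>; for larger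
\<open>\<epsilon>\<close> it suffices that \<open>u\<close> is bounded and its positive values are bounded away from \<open>0\<close>.
\<close>

lemma mem_compositions_iff:
  "xs \<in> compositions N \<longleftrightarrow> (\<forall>n\<in>set xs. 0 < n) \<and> sum_list xs = N"
  by (auto simp: compositions_def Suc_le_eq)

lemma finite_compositions: "finite (compositions N)"
proof (rule finite_subset)
  have "length xs \<le> sum_list xs" if "\<forall>n\<in>set xs. 0 < n" for xs :: "nat list"
    using that by (induction xs) auto
  then show "compositions N \<subseteq> {xs. set xs \<subseteq> {0..N} \<and> length xs \<le> N}"
    by (auto simp: mem_compositions_iff dest: member_le_sum_list)
  show "finite {xs. set xs \<subseteq> {0..N} \<and> length xs \<le> N}"
    by (rule finite_lists_length_le) simp
qed

lemma prefix_by_sum_list: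
  fixes xs :: "nat list"
  assumes "\<forall>n\<in>set xs. 0 < n" "prefix ys xs" "prefix ys' xs" "sum_list ys \<le> sum_list ys'"
  shows "prefix ys ys'"
  using prefix_same_cases[OF assms(2,3)]
proof
  assume "prefix ys' ys"
  then obtain us where us: "ys = ys' @ us" by (auto simp: prefix_def)
  then have "\<forall>n\<in>set us. 0 < n" using assms(1,2) set_mono_prefix by fastforce
  moreover have "sum_list us = 0" using us assms(4) by (simp add: le_add_same_cancel1)
  ultimately have "us = []" by (cases us) auto
  with us show ?thesis by simp
qed

lemma sum_prod_list_compositions_append:
  fixes q :: "nat \<Rightarrow> 'a::comm_semiring_1"
  assumes "r \<le> N"
  shows "(\<Sum>xs | xs \<in> compositions N \<and> (\<exists>ys zs. xs = ys @ zs \<and> ys \<in> compositions r \<and> P ys \<and> R zs).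
            prod_list (map q xs))
    = (\<Sum>ys | ys \<in> compositions r \<and> P ys. prod_list (map q ys))
      * (\<Sum>zs | zs \<in> compositions (N - r) \<and> R zs. prod_list (map q zs))"
proof -
  define A where "A = {ys. ys \<in> compositions r \<and> P ys}"
  define B where "B = {zs. zs \<in> compositions (N - r) \<and> R zs}"
  have split: "{xs. xs \<in> compositions N \<and> (\<exists>ys zs. xs = ys @ zs \<and> ys \<in> compositions r \<and> P ys \<and> R zs)}
      = (\<lambda>(ys, zs). ys @ zs) ` (A \<times> B)"
    using assms by (auto simp: A_def B_def mem_compositions_iff)
  have "inj_on (\<lambda>(ys, zs). ys @ zs) (A \<times> B)"
  proof (rule inj_onI, clarify)
    fix ys zs ys' zs' assume mem: "ys \<in> A" "zs \<in> B" "ys' \<in> A" "zs' \<in> B"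
      and eq: "ys @ zs = ys' @ zs'"
    have pos: "\<forall>n\<in>set (ys @ zs). 0 < n" and sums: "sum_list ys = sum_list ys'"
      using mem by (auto simp: A_def B_def mem_compositions_iff)
    have "prefix ys (ys @ zs)" "prefix ys' (ys @ zs)" unfolding prefix_def using eq by blast+
    with pos sums have "ys = ys'" using prefix_by_sum_list prefix_order.antisym by (metis order_refl)
    with eq show "ys = ys' \<and> zs = zs'" by simp
  qed
  moreover have "finite A" "finite B"
    using finite_compositions by (auto simp: A_def B_def)
  ultimately have "(\<Sum>xs\<in>(\<lambda>(ys, zs). ys @ zs) ` (A \<times> B). prod_list (map q xs))
      = (\<Sum>ys\<in>A. \<Sum>zs\<in>B. prod_list (map q ys) * prod_list (map q zs))"
    by (simp add: sum.reindex sum.cartesian_product case_prod_beta')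
  then show ?thesis
    unfolding split A_def[symmetric] B_def[symmetric] by (simp add: sum_product)
qed

fun rods_of :: "nat \<Rightarrow> nat \<Rightarrow> nat list \<Rightarrow> nat set set" where
  "rods_of p j [] = {}"
| "rods_of p j (n # ns) = insert (rod p j n) (rods_of p (j + n) ns)"

lemma rods_of_append:
  "rods_of p j (xs @ ys) = rods_of p j xs \<union> rods_of p (j + sum_list xs) ys"
  by (induction xs arbitrary: j) (auto simp: add.assoc)

lemma finite_rods_of: "finite (rods_of p j xs)"
  by (induction xs arbitrary: j) auto

lemma card_rod: "card (rod p j n) = p * n"
  by (simp add: rod_def)

lemma Min_rod: "0 < p \<Longrightarrow> 0 < n \<Longrightarrow> Min (rod p j n) = p * j"
  by (rule Min_eqI) (auto simp: rod_def)

lemma left_end_in_rod: "0 < p \<Longrightarrow> 0 < n \<Longrightarrow> p * j \<in> rod p j n"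
  by (simp add: rod_def)

lemma rod_subset_rods_of_interval:
  "A \<in> rods_of p j xs \<Longrightarrow> A \<subseteq> {p * j..<p * (j + sum_list xs)}"
  by (induction xs arbitrary: j) (fastforce simp: rod_def algebra_simps)+

lemma Union_rods_of: "\<Union>(rods_of p j xs) = {p * j..<p * (j + sum_list xs)}"
proof (induction xs arbitrary: j)
  case (Cons n xs)
  have "rod p j n \<union> {p * (j + n)..<p * (j + n + sum_list xs)} = {p * j..<p * (j + (n + sum_list xs))}"
    by (auto simp: rod_def algebra_simps)
  then show ?case using Cons by (simp add: add.assoc)
qed simp

lemma rod_notin_rods_of_after:
  assumes "0 < p" "0 < n"
  shows "rod p j n \<notin> rods_of p (j + n) xs"
proof
  assume "rod p j n \<in> rods_of p (j + n) xs"
  then have "p * j \<in> {p * (j + n)..<p * (j + n + sum_list xs)}"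
    using rod_subset_rods_of_interval left_end_in_rod[OF assms] by blast
  with assms show False by simp
qed

lemma mem_rods_of_imp_rod:
  "\<forall>n\<in>set xs. 0 < n \<Longrightarrow> A \<in> rods_of p j xs \<Longrightarrow> \<exists>j' n. 1 \<le> n \<and> A = rod p j' n"
  by (induction xs arbitrary: j) (auto simp: Suc_le_eq)

lemma rods_of_nonempty:
  "0 < p \<Longrightarrow> \<forall>n\<in>set xs. 0 < n \<Longrightarrow> A \<in> rods_of p j xs \<Longrightarrow> A \<noteq> {}"
  by (induction xs arbitrary: j) (auto simp: rod_def)

lemma rods_of_disjoint:
  "A \<in> rods_of p j xs \<Longrightarrow> B \<in> rods_of p j xs \<Longrightarrow> A \<noteq> B \<Longrightarrow> A \<inter> B = {}"
proof (induction xs arbitrary: j)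
  case (Cons n xs)
  have "rod p j n \<inter> C = {}" if "C \<in> rods_of p (j + n) xs" for C
    using rod_subset_rods_of_interval[OF that] by (fastforce simp: rod_def algebra_simps)
  with Cons show ?case by auto
qed simp

lemma part_weight_rods_of:
  "0 < p \<Longrightarrow> \<forall>n\<in>set xs. 0 < n \<Longrightarrow> part_weight p q (rods_of p j xs) = prod_list (map q xs)"
  by (induction xs arbitrary: j)
     (simp_all add: part_weight_def finite_rods_of rod_notin_rods_of_after card_rod)

lemma rods_of_inject:
  assumes "0 < p" "\<forall>n\<in>set xs. 0 < n" "\<forall>n\<in>set ys. 0 < n" "rods_of p j xs = rods_of p j ys"
  shows "xs = ys"
  using assms(2-)
proof (induction xs arbitrary: j ys)
  case Nil
  then show ?case by (cases ys) auto
next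
  case (Cons n xs)
  then obtain m ys' where ys: "ys = m # ys'" by (cases ys) auto
  have n: "0 < n" and m: "0 < m" using Cons.prems ys by auto
  have "rod p j n \<in> insert (rod p j m) (rods_of p (j + m) ys')"
    using Cons.prems(3) ys by (metis insertI1 rods_of.simps(2))
  moreover have "rod p j n \<notin> rods_of p (j + m) ys'"
  proof
    assume "rod p j n \<in> rods_of p (j + m) ys'"
    then have "p * j \<in> {p * (j + m)..<p * (j + m + sum_list ys')}"
      using rod_subset_rods_of_interval left_end_in_rod[OF assms(1) n] by blast
    with assms(1) m show False by simp
  qed
  ultimately have "rod p j n = rod p j m" by blast
  then have "n = m" using assms(1) by (metis card_rod mult_cancel1 not_gr0)
  have "rods_of p (j + n) xs = rods_of p j (n # xs) - {rod p j n}"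
    using rod_notin_rods_of_after[OF assms(1) n] by simp
  also have "\<dots> = rods_of p (j + n) ys'"
    using Cons.prems(3) ys \<open>n = m\<close> rod_notin_rods_of_after[OF assms(1) m] by simp
  finally show ?case using Cons ys \<open>n = m\<close> by simp
qed

lemma rod_partition_left_rod:
  assumes p: "0 < p" and M: "0 < M" and U: "\<Union>P = {p * a..<p * (a + M)}"
    and rods: "\<forall>A\<in>P. \<exists>j n. 1 \<le> n \<and> A = rod p j n"
  obtains n where "0 < n" "n \<le> M" "rod p a n \<in> P"
proof -
  have "p * a \<in> \<Union>P" using U p M by simp
  then obtain A where A: "A \<in> P" "p * a \<in> A" by blast
  with rods obtain j n where n: "1 \<le> n" and An: "A = rod p j n" by blast
  have A_sub: "A \<subseteq> {p * a..<p * (a + M)}" using U A(1) by blast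
  have "p * j \<in> A" using An n p by (simp add: left_end_in_rod)
  with A(2) A_sub An have "p * j = p * a" by (auto simp: rod_def)
  then have "j = a" using p by simp
  have "1 \<le> p * n" using n p by simp
  then have "p * a + (p * n - 1) \<in> A"
    unfolding An \<open>j = a\<close> rod_def atLeastLessThan_iff by linarith
  then have "p * a + (p * n - 1) < p * a + p * M"
    using A_sub by (auto simp: add_mult_distrib2)
  then have "p * n \<le> p * M" by linarith
  then have "n \<le> M" using p by simp
  with n A An \<open>j = a\<close> show thesis by (intro that) auto
qed

lemma rod_partition_eq_rods_of:
  assumes p: "0 < p" and U: "\<Union>P = {p * a..<p * (a + M)}"
    and disj: "\<forall>A\<in>P. \<forall>B\<in>P. A \<noteq> B \<longrightarrow> A \<inter> B = {}"
    and rods: "\<forall>A\<in>P. \<exists>j n. 1 \<le> n \<and> A = rod p j n"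
  shows "\<exists>xs. (\<forall>n\<in>set xs. 0 < n) \<and> sum_list xs = M \<and> P = rods_of p a xs"
  using U disj rods
proof (induction M arbitrary: a P rule: less_induct)
  case (less M)
  show ?case
  proof (cases "M = 0")
    case True
    then have "\<Union>P = {}" using less.prems(1) by simp
    have "P = {}"
    proof (rule ccontr)
      assume "P \<noteq> {}"
      then obtain A where "A \<in> P" by blast
      with less.prems(3) obtain j n where "1 \<le> n" "A = rod p j n" by blast
      with p \<open>A \<in> P\<close> have "p * j \<in> \<Union>P" by (auto simp: left_end_in_rod)
      with \<open>\<Union>P = {}\<close> show False by blast
    qed
    with True show ?thesis by (intro exI[of _ "[]"]) simp
  next
    case False
    then obtain n where n: "0 < n" "n \<le> M" and A: "rod p a n \<in> P"
      using rod_partition_left_rod[OF p _ less.prems(1) less.prems(3)] by blast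
    define P' where "P' = P - {rod p a n}"
    have "\<Union>P' = \<Union>P - rod p a n"
      using less.prems(2) A unfolding P'_def by blast
    also have "\<dots> = {p * (a + n)..<p * (a + n + (M - n))}"
      unfolding less.prems(1) rod_def using n by (auto simp: add_mult_distrib2)
    finally have U': "\<Union>P' = {p * (a + n)..<p * (a + n + (M - n))}" .
    have "M - n < M" using n by simp
    moreover have "\<forall>A\<in>P'. \<forall>B\<in>P'. A \<noteq> B \<longrightarrow> A \<inter> B = {}"
      using less.prems(2) by (simp add: P'_def)
    moreover have "\<forall>A\<in>P'. \<exists>j n. 1 \<le> n \<and> A = rod p j n"
      using less.prems(3) by (simp add: P'_def)
    ultimately obtain xs where xs: "\<forall>n\<in>set xs. 0 < n" "sum_list xs = M - n" "P' = rods_of p (a + n) xs"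
      using less.IH[OF _ U'] by meson
    have "P = rods_of p a (n # xs)" using A xs(3) unfolding P'_def by auto
    with xs n show ?thesis by (intro exI[of _ "n # xs"]) auto
  qed
qed

lemma rod_partitions_eq_image:
  assumes p: "0 < p"
  shows "rod_partitions p N = rods_of p 0 ` compositions N"
proof
  show "rod_partitions p N \<subseteq> rods_of p 0 ` compositions N"
  proof
    fix P assume "P \<in> rod_partitions p N"
    then obtain xs where "xs \<in> compositions N" "P = rods_of p 0 xs"
      using rod_partition_eq_rods_of[OF p, of P 0 N]
      unfolding rod_partitions_def mem_compositions_iff by auto
    then show "P \<in> rods_of p 0 ` compositions N" by blast
  qed
  show "rods_of p 0 ` compositions N \<subseteq> rod_partitions p N"
  proof
    fix P assume "P \<in> rods_of p 0 ` compositions N"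
    then obtain xs where xs: "\<forall>n\<in>set xs. 0 < n" "sum_list xs = N" "P = rods_of p 0 xs"
      by (auto simp: mem_compositions_iff)
    have "\<Union>P = {0..<p * N}" using Union_rods_of[of p 0 xs] xs(2,3) by simp
    moreover have "\<forall>A\<in>P. \<forall>B\<in>P. A \<noteq> B \<longrightarrow> A \<inter> B = {}"
      using rods_of_disjoint xs(3) by blast
    moreover have "\<forall>A\<in>P. \<exists>j n. 1 \<le> n \<and> A = rod p j n"
      using mem_rods_of_imp_rod[OF xs(1)] xs(3) by blast
    ultimately show "P \<in> rod_partitions p N" by (simp add: rod_partitions_def)
  qed
qed

lemma Min_rods_of_Un_eq_prefix_sums:
  assumes "0 < p" "\<forall>n\<in>set xs. 0 < n"
  shows "Min ` rods_of p j xs \<union> {p * (j + sum_list xs)} = (\<lambda>ys. p * (j + sum_list ys)) ` set (prefixes xs)"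
  using assms(2)
proof (induction xs arbitrary: j)
  case (Cons n xs)
  then have "Min ` rods_of p j (n # xs) \<union> {p * (j + sum_list (n # xs))}
      = insert (p * j) (Min ` rods_of p (j + n) xs \<union> {p * (j + n + sum_list xs)})"
    using assms(1) by (auto simp: Min_rod add.assoc)
  also have "\<dots> = insert (p * j) ((\<lambda>ys. p * (j + n + sum_list ys)) ` set (prefixes xs))"
    using Cons by simp
  also have "\<dots> = (\<lambda>ys. p * (j + sum_list ys)) ` set (prefixes (n # xs))"
    by (simp add: image_image add.assoc)
  finally show ?case .
qed simp

lemma restrict_part_Un:
  assumes "\<forall>A\<in>X. A \<subseteq> S \<and> A \<noteq> {}" "\<forall>A\<in>Y. A \<inter> S = {}"
  shows "restrict_part (X \<union> Y) S = X"
proof -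
  have "(\<lambda>A. A \<inter> S) ` X = X" using assms(1) by (auto simp: Int_absorb2)
  moreover have "(\<lambda>A. A \<inter> S) ` Y \<subseteq> {{}}" using assms(2) by auto
  moreover have "{} \<notin> X" using assms(1) by auto
  ultimately show ?thesis unfolding restrict_part_def image_Un by blast
qed

lemma restrict_part_rods_of_append:
  assumes p: "0 < p" and pos: "\<forall>n\<in>set (ys @ zs). 0 < n"
  shows "restrict_part (rods_of p j (ys @ zs)) {p * j..<p * (j + sum_list ys)} = rods_of p j ys"
    and "restrict_part (rods_of p j (ys @ zs)) {p * (j + sum_list ys)..<p * (j + sum_list ys + sum_list zs)}
      = rods_of p (j + sum_list ys) zs"
proof -
  have ys: "A \<subseteq> {p * j..<p * (j + sum_list ys)}" "A \<noteq> {}" if "A \<in> rods_of p j ys" for A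
    using that rod_subset_rods_of_interval rods_of_nonempty[OF p, of ys] pos by auto
  have zs: "A \<subseteq> {p * (j + sum_list ys)..<p * (j + sum_list ys + sum_list zs)}" "A \<noteq> {}"
    if "A \<in> rods_of p (j + sum_list ys) zs" for A
    using that rod_subset_rods_of_interval[of A p "j + sum_list ys" zs] rods_of_nonempty[OF p, of zs] pos
    by (auto simp: add.assoc)
  show "restrict_part (rods_of p j (ys @ zs)) {p * j..<p * (j + sum_list ys)} = rods_of p j ys"
    unfolding rods_of_append using ys zs by (intro restrict_part_Un) fastforce+
  show "restrict_part (rods_of p j (ys @ zs)) {p * (j + sum_list ys)..<p * (j + sum_list ys + sum_list zs)}
      = rods_of p (j + sum_list ys) zs"
    unfolding rods_of_append Un_commute[of "rods_of p j ys"] using ys zs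
    by (intro restrict_part_Un) fastforce+
qed

lemma renewal_point_rods_of_iff:
  assumes p: "0 < p" and xs: "xs \<in> compositions N"
  shows "p * k \<in> renewal_points p N (rods_of p 0 xs) \<longleftrightarrow> (\<exists>ys zs. xs = ys @ zs \<and> sum_list ys = k)"
  using Min_rods_of_Un_eq_prefix_sums[OF p, of xs 0] xs p
  by (auto simp: renewal_points_def mem_compositions_iff prefix_def)

lemma rods_of_in_event_L_iff:
  assumes p: "0 < p" and xs: "xs \<in> compositions N"
  shows "rods_of p 0 xs \<in> event_L p N r Q
    \<longleftrightarrow> (\<exists>ys zs. xs = ys @ zs \<and> ys \<in> compositions r \<and> rods_of p 0 ys = Q)"
proof -
  have "restrict_part (rods_of p 0 (ys @ zs)) {0..<p * sum_list ys} = rods_of p 0 ys"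
    if "xs = ys @ zs" for ys zs
    using restrict_part_rods_of_append(1)[OF p, of ys zs 0] that xs by (simp add: mem_compositions_iff)
  then show ?thesis
    unfolding event_L_def mem_Collect_eq renewal_point_rods_of_iff[OF assms]
    using xs by (auto simp: mem_compositions_iff)
qed

lemma rods_of_in_event_R_iff:
  assumes p: "0 < p" and xs: "xs \<in> compositions N"
  shows "rods_of p 0 xs \<in> event_R p N s Q
    \<longleftrightarrow> (\<exists>ys zs. xs = ys @ zs \<and> ys \<in> compositions s \<and> rods_of p s zs = Q)"
proof -
  have "restrict_part (rods_of p 0 (ys @ zs)) {p * sum_list ys..<p * N} = rods_of p (sum_list ys) zs"
    if "xs = ys @ zs" for ys zs
    using restrict_part_rods_of_append(2)[OF p, of ys zs 0] that xs by (simp add: mem_compositions_iff)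
  then show ?thesis
    unfolding event_R_def mem_Collect_eq renewal_point_rods_of_iff[OF assms]
    using xs by (auto simp: mem_compositions_iff) blast
qed

lemma rods_of_in_event_L_R_iff:
  assumes p: "0 < p" and xs: "xs \<in> compositions N" and "r \<le> s"
  shows "rods_of p 0 xs \<in> event_L p N r Q1 \<inter> event_R p N s Q2
    \<longleftrightarrow> (\<exists>ys t. xs = ys @ t \<and> ys \<in> compositions r \<and> rods_of p 0 ys = Q1
          \<and> (\<exists>ms zs. t = ms @ zs \<and> ms \<in> compositions (s - r) \<and> rods_of p s zs = Q2))"
proof
  assume "rods_of p 0 xs \<in> event_L p N r Q1 \<inter> event_R p N s Q2"
  then have "rods_of p 0 xs \<in> event_L p N r Q1" and "rods_of p 0 xs \<in> event_R p N s Q2"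
    by auto
  then obtain ys t ys' zs where L: "xs = ys @ t" "ys \<in> compositions r" "rods_of p 0 ys = Q1"
    and R: "xs = ys' @ zs" "ys' \<in> compositions s" "rods_of p s zs = Q2"
    unfolding rods_of_in_event_L_iff[OF p xs] rods_of_in_event_R_iff[OF p xs] by blast
  have "prefix ys xs" "prefix ys' xs" unfolding prefix_def using L(1) R(1) by blast+
  moreover have "\<forall>n\<in>set xs. 0 < n" using xs by (simp add: mem_compositions_iff)
  moreover have "sum_list ys \<le> sum_list ys'"
    using L(2) R(2) \<open>r \<le> s\<close> by (simp add: mem_compositions_iff)
  ultimately have "prefix ys ys'" using prefix_by_sum_list by blast
  then obtain ms where "ys' = ys @ ms" by (auto simp: prefix_def)
  with L R have "t = ms @ zs" "ms \<in> compositions (s - r)"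
    by (auto simp: mem_compositions_iff)
  with L R show "\<exists>ys t. xs = ys @ t \<and> ys \<in> compositions r \<and> rods_of p 0 ys = Q1
          \<and> (\<exists>ms zs. t = ms @ zs \<and> ms \<in> compositions (s - r) \<and> rods_of p s zs = Q2)"
    by blast
next
  assume "\<exists>ys t. xs = ys @ t \<and> ys \<in> compositions r \<and> rods_of p 0 ys = Q1
          \<and> (\<exists>ms zs. t = ms @ zs \<and> ms \<in> compositions (s - r) \<and> rods_of p s zs = Q2)"
  then obtain ys ms zs where split: "xs = (ys @ ms) @ zs" and ys: "ys \<in> compositions r"
    "rods_of p 0 ys = Q1" and ms: "ms \<in> compositions (s - r)" and zs: "rods_of p s zs = Q2"
    by auto
  have "ys @ ms \<in> compositions s" using ys(1) ms \<open>r \<le> s\<close> by (auto simp: mem_compositions_iff)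
  with split zs have "rods_of p 0 xs \<in> event_R p N s Q2"
    unfolding rods_of_in_event_R_iff[OF p xs] by blast
  moreover have "rods_of p 0 xs \<in> event_L p N r Q1"
    unfolding rods_of_in_event_L_iff[OF p xs] using split ys by (metis append.assoc)
  ultimately show "rods_of p 0 xs \<in> event_L p N r Q1 \<inter> event_R p N s Q2" by blast
qed

definition event_weight :: "nat \<Rightarrow> (nat \<Rightarrow> real) \<Rightarrow> nat \<Rightarrow> nat set set set \<Rightarrow> real" where
  "event_weight p q N E = (\<Sum>P\<in>rod_partitions p N \<inter> E. part_weight p q P)"

definition prefix_weight :: "nat \<Rightarrow> (nat \<Rightarrow> real) \<Rightarrow> nat \<Rightarrow> nat set set \<Rightarrow> real" where
  "prefix_weight p q r Q = (\<Sum>ys | ys \<in> compositions r \<and> rods_of p 0 ys = Q. prod_list (map q ys))"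

definition suffix_weight :: "nat \<Rightarrow> (nat \<Rightarrow> real) \<Rightarrow> nat \<Rightarrow> nat \<Rightarrow> nat set set \<Rightarrow> real" where
  "suffix_weight p q N s Q = (\<Sum>zs | zs \<in> compositions (N - s) \<and> rods_of p s zs = Q. prod_list (map q zs))"

lemma event_weight_eq_sum_compositions:
  assumes p: "0 < p"
  shows "event_weight p q N E = (\<Sum>xs | xs \<in> compositions N \<and> rods_of p 0 xs \<in> E. prod_list (map q xs))"
proof -
  have "rod_partitions p N \<inter> E = rods_of p 0 ` {xs. xs \<in> compositions N \<and> rods_of p 0 xs \<in> E}"
    using rod_partitions_eq_image[OF p] by auto
  moreover have "inj_on (rods_of p 0) {xs. xs \<in> compositions N \<and> rods_of p 0 xs \<in> E}"
    by (rule inj_onI) (auto simp: mem_compositions_iff intro: rods_of_inject[OF p])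
  ultimately show ?thesis
    unfolding event_weight_def
    by (simp add: sum.reindex part_weight_rods_of[OF p] mem_compositions_iff)
qed

lemma event_weight_event_L:
  assumes p: "0 < p" and "r \<le> N"
  shows "event_weight p q N (event_L p N r Q) = prefix_weight p q r Q * renewal_u q (N - r)"
proof -
  have "{xs. xs \<in> compositions N \<and> rods_of p 0 xs \<in> event_L p N r Q}
      = {xs. xs \<in> compositions N \<and> (\<exists>ys zs. xs = ys @ zs \<and> ys \<in> compositions r \<and> rods_of p 0 ys = Q)}"
    by (rule Collect_cong, rule conj_cong, rule refl, rule rods_of_in_event_L_iff[OF p])
  then show ?thesis
    using sum_prod_list_compositions_append[OF \<open>r \<le> N\<close>,
        where P = "\<lambda>ys. rods_of p 0 ys = Q" and R = "\<lambda>_. True" and q = q]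
    by (simp add: event_weight_eq_sum_compositions[OF p] prefix_weight_def renewal_u_def)
qed

lemma event_weight_event_R:
  assumes p: "0 < p" and "s \<le> N"
  shows "event_weight p q N (event_R p N s Q) = renewal_u q s * suffix_weight p q N s Q"
proof -
  have "{xs. xs \<in> compositions N \<and> rods_of p 0 xs \<in> event_R p N s Q}
      = {xs. xs \<in> compositions N \<and> (\<exists>ys zs. xs = ys @ zs \<and> ys \<in> compositions s \<and> rods_of p s zs = Q)}"
    by (rule Collect_cong, rule conj_cong, rule refl, rule rods_of_in_event_R_iff[OF p])
  then show ?thesis
    using sum_prod_list_compositions_append[OF \<open>s \<le> N\<close>,
        where P = "\<lambda>_. True" and R = "\<lambda>zs. rods_of p s zs = Q" and q = q]
    by (simp add: event_weight_eq_sum_compositions[OF p] suffix_weight_def renewal_u_def)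
qed

lemma event_weight_event_L_event_R:
  assumes p: "0 < p" and "r \<le> s" "s \<le> N"
  shows "event_weight p q N (event_L p N r Q1 \<inter> event_R p N s Q2)
    = prefix_weight p q r Q1 * renewal_u q (s - r) * suffix_weight p q N s Q2"
proof -
  let ?R = "\<lambda>t. \<exists>ms zs. t = ms @ zs \<and> ms \<in> compositions (s - r) \<and> rods_of p s zs = Q2"
  have "{xs. xs \<in> compositions N \<and> rods_of p 0 xs \<in> event_L p N r Q1 \<inter> event_R p N s Q2}
      = {xs. xs \<in> compositions N
            \<and> (\<exists>ys t. xs = ys @ t \<and> ys \<in> compositions r \<and> rods_of p 0 ys = Q1 \<and> ?R t)}"
    by (rule Collect_cong, rule conj_cong, rule refl,
        rule rods_of_in_event_L_R_iff[OF p _ \<open>r \<le> s\<close>])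
  moreover have "(\<Sum>t | t \<in> compositions (N - r) \<and> ?R t. prod_list (map q t))
      = renewal_u q (s - r) * suffix_weight p q N s Q2"
    using sum_prod_list_compositions_append[of "s - r" "N - r" q "\<lambda>_. True" "\<lambda>zs. rods_of p s zs = Q2"]
      assms
    by (simp add: suffix_weight_def renewal_u_def)
  ultimately show ?thesis
    using sum_prod_list_compositions_append[of r N q "\<lambda>ys. rods_of p 0 ys = Q1" ?R] assms
    by (simp add: event_weight_eq_sum_compositions[OF p] prefix_weight_def)
qed

lemma event_weight_nonneg: "(\<And>n. 0 \<le> q n) \<Longrightarrow> 0 \<le> event_weight p q N E"
  unfolding event_weight_def part_weight_def by (simp add: sum_nonneg prod_nonneg)

lemma event_weight_mono:
  assumes "0 < p" "\<And>n. 0 \<le> q n" "E \<subseteq> F"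
  shows "event_weight p q N E \<le> event_weight p q N F"
  unfolding event_weight_def
proof (rule sum_mono2)
  show "finite (rod_partitions p N \<inter> F)"
    using rod_partitions_eq_image[OF assms(1)] finite_compositions by simp
  show "0 \<le> part_weight p q P" for P
    unfolding part_weight_def using assms(2) by (simp add: prod_nonneg)
qed (use assms(3) in blast)

lemma abs_mult_diff_le_of_near:
  fixes x y z w c B e :: real
  assumes "0 < c" "\<bar>z\<bar> \<le> B" "\<bar>w\<bar> \<le> B"
    and "\<bar>x - c\<bar> \<le> e" "\<bar>y - c\<bar> \<le> e" "\<bar>z - c\<bar> \<le> e" "\<bar>w - c\<bar> \<le> e"
  shows "\<bar>x * w - y * z\<bar> \<le> 2 * (B + c) * e"
proof -
  have "x * w - y * z = (x - c) * w + c * (w - c) - (y - c) * z - c * (z - c)"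
    by (simp add: algebra_simps)
  then have "\<bar>x * w - y * z\<bar> \<le> \<bar>(x - c) * w\<bar> + \<bar>c * (w - c)\<bar> + \<bar>(y - c) * z\<bar> + \<bar>c * (z - c)\<bar>"
    by arith
  also have "\<dots> = \<bar>x - c\<bar> * \<bar>w\<bar> + c * \<bar>w - c\<bar> + \<bar>y - c\<bar> * \<bar>z\<bar> + c * \<bar>z - c\<bar>"
    using assms(1) by (simp add: abs_mult)
  also have "\<dots> \<le> e * B + c * e + e * B + c * e"
    using assms by (intro add_mono mult_mono) auto
  finally show ?thesis by (simp add: algebra_simps)
qed

lemma abs_mult_diff_le_relative:
  fixes x y z w c B m e K :: real
  assumes c: "0 < c" and m: "0 < m"
    and bounds: "\<bar>x\<bar> \<le> B" "\<bar>y\<bar> \<le> B" "\<bar>z\<bar> \<le> B" "\<bar>w\<bar> \<le> B"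
    and lower: "m \<le> y" "m \<le> z"
    and close: "\<bar>x - c\<bar> \<le> e" "\<bar>y - c\<bar> \<le> e" "\<bar>z - c\<bar> \<le> e" "\<bar>w - c\<bar> \<le> e"
    and K: "4 * B\<^sup>2 \<le> K * m\<^sup>2 * c" "8 * (B + c) \<le> K * c\<^sup>2"
  shows "\<bar>x * w - y * z\<bar> \<le> K * y * z * e"
proof -
  have "0 \<le> B" using bounds(1) by linarith
  with c K(2) have "0 \<le> K" by (smt (verit) mult_nonpos_nonneg zero_le_power2)
  show ?thesis
  proof (cases "c / 2 \<le> e")
    case True
    have "\<bar>x * w - y * z\<bar> \<le> \<bar>x\<bar> * \<bar>w\<bar> + \<bar>y\<bar> * \<bar>z\<bar>"
      by (simp add: abs_mult[symmetric] abs_triangle_ineq4)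
    also have "\<dots> \<le> B * B + B * B"
      using bounds by (intro add_mono mult_mono) auto
    also have "\<dots> \<le> K * (m * m) * (c / 2)"
      using K(1) by (simp add: power2_eq_square)
    also have "\<dots> \<le> K * (y * z) * e"
      using lower m c True \<open>0 \<le> K\<close> by (intro mult_mono mult_left_mono) auto
    finally show ?thesis by (simp add: mult.assoc)
  next
    case False
    then have yz: "c / 2 \<le> y" "c / 2 \<le> z" using close(2,3) by linarith+
    have "\<bar>x * w - y * z\<bar> \<le> 2 * (B + c) * e"
      using abs_mult_diff_le_of_near[OF c bounds(3,4) close] .
    also have "\<dots> = 8 * (B + c) / c\<^sup>2 * (c / 2 * (c / 2)) * e"
      using c by (simp add: power2_eq_square field_simps)
    also have "\<dots> \<le> K * (y * z) * e"
    proof (rule mult_right_mono)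
      have "8 * (B + c) / c\<^sup>2 \<le> K" using K(2) c by (simp add: pos_divide_le_eq)
      moreover have "c / 2 * (c / 2) \<le> y * z" using yz c by (intro mult_mono) auto
      ultimately show "8 * (B + c) / c\<^sup>2 * (c / 2 * (c / 2)) \<le> K * (y * z)"
        by (rule mult_mono) (use \<open>0 \<le> K\<close> c in auto)
      show "0 \<le> e" using close(1) by linarith
    qed
    finally show ?thesis by (simp add: mult.assoc)
  qed
qed

lemma abs_ratio_diff_le:
  fixes a b x y z w K e :: real
  assumes "0 \<le> a" "0 \<le> b" "0 < w" "\<bar>x * w - y * z\<bar> \<le> K * y * z * e"
  shows "\<bar>a * x * b / w - a * y / w * (z * b / w)\<bar> \<le> K * (a * y / w) * (z * b / w) * e"
proof -
  have "a * x * b / w - a * y / w * (z * b / w) = a * b / w\<^sup>2 * (x * w - y * z)"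
    using assms(3) by (simp add: field_simps power2_eq_square)
  then have "\<bar>a * x * b / w - a * y / w * (z * b / w)\<bar> = a * b / w\<^sup>2 * \<bar>x * w - y * z\<bar>"
    using assms(1-3) by (simp add: abs_mult)
  also have "\<dots> \<le> a * b / w\<^sup>2 * (K * y * z * e)"
    using assms by (intro mult_left_mono) auto
  also have "\<dots> = K * (a * y / w) * (z * b / w) * e"
    using assms(3) by (simp add: field_simps power2_eq_square)
  finally show ?thesis .
qed

lemma renewal_mu_ge_1:
  assumes q_nonneg: "\<And>n. 0 \<le> q n" and q_sum: "(\<lambda>n. q (Suc n)) sums 1"
    and q_mean: "summable (\<lambda>n. real n * q n)"
  shows "1 \<le> renewal_mu q"
proof -
  have "renewal_mu q = (\<Sum>n. real (Suc n) * q (Suc n))"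
    unfolding renewal_mu_def using suminf_split_head[OF q_mean] by simp
  moreover have "(\<Sum>n. q (Suc n)) \<le> (\<Sum>n. real (Suc n) * q (Suc n))"
  proof (rule suminf_le)
    show "q (Suc n) \<le> real (Suc n) * q (Suc n)" for n
      using q_nonneg[of "Suc n"] by (simp add: algebra_simps)
    show "summable (\<lambda>n. q (Suc n))" using q_sum by (rule sums_summable)
    show "summable (\<lambda>n. real (Suc n) * q (Suc n))"
      using q_mean summable_Suc_iff[of "\<lambda>n. real n * q n"] by simp
  qed
  moreover have "(\<Sum>n. q (Suc n)) = 1" using q_sum by (rule sums_unique[symmetric])
  ultimately show ?thesis by simp
qed

lemma LIMSEQ_positive_values_bounded_below:
  fixes u :: "nat \<Rightarrow> real"
  assumes "u \<longlonglongrightarrow> c" "0 < c"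
  obtains m where "0 < m" "\<And>k. 0 < u k \<Longrightarrow> m \<le> u k"
proof -
  have "eventually (\<lambda>k. c / 2 < u k) sequentially"
    using order_tendstoD(1)[OF assms(1), of "c / 2"] assms(2) by simp
  then obtain k0 where k0: "\<And>k. k0 \<le> k \<Longrightarrow> c / 2 < u k"
    unfolding eventually_sequentially by blast
  define m where "m = Min (insert (c / 2) (u ` {k. k < k0 \<and> 0 < u k}))"
  have fin: "finite (insert (c / 2) (u ` {k. k < k0 \<and> 0 < u k}))" by simp
  show thesis
  proof
    show "0 < m" unfolding m_def using fin assms(2) by (auto simp: Min_gr_iff)
    show "m \<le> u k" if "0 < u k" for k
    proof (cases "k < k0")
      case True
      with that fin show ?thesis unfolding m_def by (intro Min_le) auto
    next
      case False
      have "m \<le> c / 2" unfolding m_def using fin by (intro Min_le) auto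
      with k0[of k] False show ?thesis by simp
    qed
  qed
qed

lemma prob_N_event_L_event_R_decorrelation:
  fixes q :: "nat \<Rightarrow> real"
  assumes p: "0 < p" and q: "\<And>n. 0 \<le> q n" and c: "0 < c" and m: "0 < m"
    and u_bound: "\<And>k. \<bar>renewal_u q k\<bar> \<le> B"
    and u_lower: "\<And>k. 0 < renewal_u q k \<Longrightarrow> m \<le> renewal_u q k"
    and K: "4 * B\<^sup>2 \<le> K * m\<^sup>2 * c" "8 * (B + c) \<le> K * c\<^sup>2"
    and rs: "r \<le> s" and sN: "s \<le> N" and d: "d \<le> s - r"
  shows "\<bar>prob_N p q N (event_L p N r Q1 \<inter> event_R p N s Q2)
       - prob_N p q N (event_L p N r Q1) * prob_N p q N (event_R p N s Q2)\<bar>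
    \<le> K * prob_N p q N (event_L p N r Q1) * prob_N p q N (event_R p N s Q2)
        * (SUP k\<in>{d..}. \<bar>renewal_u q k - c\<bar>)"
proof -
  let ?u = "renewal_u q" and ?e = "SUP k\<in>{d..}. \<bar>renewal_u q k - c\<bar>"
  let ?L = "event_L p N r Q1" and ?R = "event_R p N s Q2"
  define a where "a = prefix_weight p q r Q1"
  define b where "b = suffix_weight p q N s Q2"
  have close: "\<bar>?u k - c\<bar> \<le> ?e" if "d \<le> k" for k
  proof (rule cSUP_upper)
    show "bdd_above ((\<lambda>k. \<bar>?u k - c\<bar>) ` {d..})"
      using u_bound c by (intro bdd_aboveI2[of _ _ "B + c"]) (smt (verit))
  qed (use that in simp)
  have u_nonneg: "0 \<le> ?u k" for k
    unfolding renewal_u_def using q by (intro sum_nonneg prod_list_nonneg) auto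
  have ab: "0 \<le> a" "0 \<le> b"
    unfolding a_def b_def prefix_weight_def suffix_weight_def using q
    by (intro sum_nonneg prod_list_nonneg; auto)+
  have L: "event_weight p q N ?L = a * ?u (N - r)"
    using event_weight_event_L[OF p] rs sN by (simp add: a_def)
  have R: "event_weight p q N ?R = ?u s * b"
    using event_weight_event_R[OF p sN] by (simp add: b_def)
  have LR: "event_weight p q N (?L \<inter> ?R) = a * ?u (s - r) * b"
    using event_weight_event_L_event_R[OF p rs sN] by (simp add: a_def b_def)
  have prob: "prob_N p q N E = event_weight p q N E / ?u N" for E
    by (simp add: prob_N_def event_weight_def)
  show ?thesis
  proof (cases "?u N = 0 \<or> event_weight p q N ?L = 0 \<or> event_weight p q N ?R = 0")
    case True
    have "0 \<le> event_weight p q N (?L \<inter> ?R)" by (rule event_weight_nonneg[OF q])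
    moreover have "event_weight p q N (?L \<inter> ?R) \<le> event_weight p q N ?L"
      and "event_weight p q N (?L \<inter> ?R) \<le> event_weight p q N ?R"
      by (intro event_weight_mono[OF p q]; blast)+
    ultimately show ?thesis using True unfolding prob by auto
  next
    case False
    then have pos: "0 < ?u N" "0 < ?u (N - r)" "0 < ?u s"
      using u_nonneg L R by (auto simp: less_le)
    have "\<bar>?u (s - r) * ?u N - ?u (N - r) * ?u s\<bar> \<le> K * ?u (N - r) * ?u s * ?e"
      using rs sN d by (intro abs_mult_diff_le_relative[OF c m _ _ _ _ _ _ _ _ _ _ K]
        u_bound u_lower pos close) auto
    then show ?thesis
      unfolding prob L R LR by (rule abs_ratio_diff_le[OF ab pos(1)])
  qed
qed

theorem lemma5p8:
  fixes p :: nat and q :: "nat \<Rightarrow> real"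
  assumes p_pos: "p \<ge> 1"
    and q_nonneg: "\<And>n. q n \<ge> 0"
    and q_sum: "(\<lambda>n. q (Suc n)) sums 1"
    and q_mean: "summable (\<lambda>n. real n * q n)"
    and u_lim: "renewal_u q \<longlonglongrightarrow> 1 / renewal_mu q"
  shows "\<exists>K::real. \<forall>d r s N :: nat. \<forall>Q1 Q2 :: nat set set.
    r \<le> s \<longrightarrow> s \<le> N \<longrightarrow> s - r \<ge> d \<longrightarrow>
    \<bar>prob_N p q N (event_L p N r Q1 \<inter> event_R p N s Q2)
       - prob_N p q N (event_L p N r Q1) * prob_N p q N (event_R p N s Q2)\<bar>
    \<le> K * prob_N p q N (event_L p N r Q1) * prob_N p q N (event_R p N s Q2)
        * (SUP k\<in>{d..}. \<bar>renewal_u q k - 1 / renewal_mu q\<bar>)"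
proof -
  define c where "c = 1 / renewal_mu q"
  have p: "0 < p" using p_pos by simp
  have c: "0 < c" using renewal_mu_ge_1[OF q_nonneg q_sum q_mean] by (simp add: c_def)
  have u_lim': "renewal_u q \<longlonglongrightarrow> c" using u_lim by (simp add: c_def)
  obtain B where B: "\<And>k. \<bar>renewal_u q k\<bar> \<le> B"
    using convergent_imp_Bseq[OF convergentI[OF u_lim']] by (auto simp: Bseq_def)
  obtain m where m: "0 < m" "\<And>k. 0 < renewal_u q k \<Longrightarrow> m \<le> renewal_u q k"
    using LIMSEQ_positive_values_bounded_below[OF u_lim' c] by blast
  define K where "K = max (4 * B\<^sup>2 / (m\<^sup>2 * c)) (8 * (B + c) / c\<^sup>2)"
  have "4 * B\<^sup>2 / (m\<^sup>2 * c) \<le> K" "8 * (B + c) / c\<^sup>2 \<le> K"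
    by (simp_all add: K_def)
  then have "4 * B\<^sup>2 \<le> K * m\<^sup>2 * c" "8 * (B + c) \<le> K * c\<^sup>2"
    using m(1) c by (simp_all add: pos_divide_le_eq mult.assoc)
  then show ?thesis
    unfolding c_def[symmetric]
    using prob_N_event_L_event_R_decorrelation[OF p q_nonneg c m(1) B m(2)] by blast
qed

end
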